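(* Let $K\ge1$, $n\ge0$ be integers and $\varepsilon\in(0,1)$. Consider standard percolation on $\mathbb{Z}_K$ in which each horizontal and each vertical edge is open independently with probability $1-\varepsilon$, and let $D^K(n,0)$ be the graph distance from $(0,0)$ to $(n,0)$ using open edges of $\mathbb{Z}_K$. Let $A=A(K,n,\varepsilon)$ be the event that in each unit square of $[\![0,n]\!]\times[\![-K,K]\!]$ (i.e. with vertices $(i,j),(i+1,j),(i,j+1),(i+1,j+1)$) at most one of its four edges is closed. Then \[ \mathbf{E}\big(D^K(n,0)\,\big|\,A\big)\le \mathbf{E}\big(D^{K,d}(n,0)\big)+3K. \]
   Context: $\mathbb{Z}_K=\mathbb{Z}\times[\![-K,K]\!]$ with vertical edges $(i,j)\to(i,j+1)$ and horizontal edges $(i,j)\to(i+1,j)$, each of length $1$. $D^{K,d}(n,0)$ refers to the Cross Model with the same $K,\varepsilon$: $\mathbb{Z}_K$ with additionally diagonal edges $(i,j)\to(i+1,j\pm1)$ of length $2$, where all vertical and diagonal edges are open and each horizontal edge is open with probability $1-\varepsilon$ independently (vertical and horizontal edges of length $1$); $D^{K,d}(n,0)$ is the length of a shortest open path in this model from $(0,0)$ to $(n,0)$. *)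

theory Defs
  imports "HOL-Probability.Probability"
begin

text \<open>Edges are indexed by keys of type bool * int * int:
  (True,i,j) is the horizontal edge (i,j)--(i+1,j),
  (False,i,j) is the vertical edge (i,j)--(i,j+1).
  A configuration omega maps each edge key to True (open) or False (closed).\<close>

definition in_strip :: "nat \<Rightarrow> int \<times> int \<Rightarrow> bool" where
  "in_strip K v \<longleftrightarrow> - int K \<le> snd v \<and> snd v \<le> int K"

definition strip_edges :: "nat \<Rightarrow> (bool \<times> int \<times> int) set" where
  "strip_edges K =
     {(True, i, j) | i j. - int K \<le> j \<and> j \<le> int K} \<union>
     {(False, i, j) | i j. - int K \<le> j \<and> j < int K}"

definition horiz_edges :: "nat \<Rightarrow> (bool \<times> int \<times> int) set" where
  "horiz_edges K = {(True, i, j) | i j. - int K \<le> j \<and> j \<le> int K}"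

definition perc_space :: "nat \<Rightarrow> real \<Rightarrow> (bool \<times> int \<times> int \<Rightarrow> bool) measure" where
  "perc_space K eps = PiM (strip_edges K) (\<lambda>_. measure_pmf (bernoulli_pmf (1 - eps)))"

definition cross_space :: "nat \<Rightarrow> real \<Rightarrow> (bool \<times> int \<times> int \<Rightarrow> bool) measure" where
  "cross_space K eps = PiM (horiz_edges K) (\<lambda>_. measure_pmf (bernoulli_pmf (1 - eps)))"

definition perc_w :: "nat \<Rightarrow> (bool \<times> int \<times> int \<Rightarrow> bool) \<Rightarrow> int \<times> int \<Rightarrow> int \<times> int \<Rightarrow> ennreal" where
  "perc_w K \<omega> u v =
     (if in_strip K u \<and> in_strip K v \<and>
         ((v = (fst u + 1, snd u) \<and> \<omega> (True, fst u, snd u)) \<or>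
          (u = (fst v + 1, snd v) \<and> \<omega> (True, fst v, snd v)) \<or>
          (v = (fst u, snd u + 1) \<and> \<omega> (False, fst u, snd u)) \<or>
          (u = (fst v, snd v + 1) \<and> \<omega> (False, fst v, snd v)))
      then 1 else \<top>)"

text \<open>Length of a single step u -> v in the Cross Model: open horizontal edges and
  (always open) vertical edges have length 1, (always open) diagonal edges
  (i,j)--(i+1,j+-1) have length 2; infinity if there is no open edge.\<close>
definition cross_w :: "nat \<Rightarrow> (bool \<times> int \<times> int \<Rightarrow> bool) \<Rightarrow> int \<times> int \<Rightarrow> int \<times> int \<Rightarrow> ennreal" where
  "cross_w K \<omega> u v =
     (if in_strip K u \<and> in_strip K v \<and>
         ((v = (fst u + 1, snd u) \<and> \<omega> (True, fst u, snd u)) \<or>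
          (u = (fst v + 1, snd v) \<and> \<omega> (True, fst v, snd v)) \<or>
          v = (fst u, snd u + 1) \<or> u = (fst v, snd v + 1))
      then 1
      else if in_strip K u \<and> in_strip K v \<and>
         (\<bar>fst v - fst u\<bar> = 1 \<and> \<bar>snd v - snd u\<bar> = 1)
      then 2 else \<top>)"

definition path_len :: "(int \<times> int \<Rightarrow> int \<times> int \<Rightarrow> ennreal) \<Rightarrow> (int \<times> int) list \<Rightarrow> ennreal" where
  "path_len w p = sum_list (map2 w p (tl p))"

definition shortest :: "(int \<times> int \<Rightarrow> int \<times> int \<Rightarrow> ennreal) \<Rightarrow> nat \<Rightarrow> ennreal" where
  "shortest w n = (INF p \<in> {p. p \<noteq> [] \<and> hd p = (0, 0) \<and> last p = (int n, 0)}. path_len w p)"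

definition perc_dist :: "nat \<Rightarrow> nat \<Rightarrow> (bool \<times> int \<times> int \<Rightarrow> bool) \<Rightarrow> ennreal" where
  "perc_dist K n \<omega> = shortest (perc_w K \<omega>) n"

definition cross_dist :: "nat \<Rightarrow> nat \<Rightarrow> (bool \<times> int \<times> int \<Rightarrow> bool) \<Rightarrow> ennreal" where
  "cross_dist K n \<omega> = shortest (cross_w K \<omega>) n"

definition square_edges :: "int \<Rightarrow> int \<Rightarrow> (bool \<times> int \<times> int) set" where
  "square_edges i j = {(True, i, j), (True, i, j + 1), (False, i, j), (False, i + 1, j)}"

definition event_A :: "nat \<Rightarrow> real \<Rightarrow> nat \<Rightarrow> (bool \<times> int \<times> int \<Rightarrow> bool) set" where
  "event_A K eps n = {\<omega> \<in> space (perc_space K eps).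
     \<forall>i j. 0 \<le> i \<and> i < int n \<and> - int K \<le> j \<and> j < int K \<longrightarrow>
       card {e \<in> square_edges i j. \<not> \<omega> e} \<le> 1}"

end

theory Submission
  imports Defs
begin

text \<open>
  On the event A every unit square of the box [0,n] \<times> [-K,K] has at most one closed edge, so in
  standard percolation diagonally adjacent vertices of the box are at distance at most 2 and
  vertically adjacent ones at distance at most 3. Along a Cross-model path from (0,0) to (n,0),
  traversed backwards, one maintains an open percolation path to (n,0) that starts in the same
  column at some row j, plus a penalty |j - current row|: every Cross step of length s costs at
  most s in this potential. Returning from (0,j) to (0,0) costs 3|j| \<le> 3K, so D^K \<le> D^{K,d} + 3K
  on A. Finally D^{K,d} depends only on finitely many horizontal edges and decreases when edges
  are opened, while A is increasing, so Harris' inequality gives E(D^{K,d}; A) \<le> E(D^{K,d}) P(A).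
\<close>

section \<open>Harris inequality for Bernoulli product measures\<close>

definition cube_sum :: "'e set \<Rightarrow> (bool \<Rightarrow> ennreal) \<Rightarrow> (('e \<Rightarrow> bool) \<Rightarrow> ennreal) \<Rightarrow> ennreal" where
  "cube_sum J w h = (\<Sum>x \<in> J \<rightarrow>\<^sub>E UNIV. (\<Prod>j\<in>J. w (x j)) * h x)"

lemma sum_PiE_bool_insert:
  assumes "a \<notin> J"
  shows "(\<Sum>x \<in> insert a J \<rightarrow>\<^sub>E (UNIV :: bool set). F x) =
         (\<Sum>b\<in>UNIV. \<Sum>y \<in> J \<rightarrow>\<^sub>E UNIV. F (y(a := b)))"
proof -
  have "(\<Sum>x \<in> insert a J \<rightarrow>\<^sub>E (UNIV :: bool set). F x)
      = (\<Sum>(b, y) \<in> UNIV \<times> (J \<rightarrow>\<^sub>E UNIV). F (y(a := b)))"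
    unfolding PiE_insert_eq
    by (subst sum.reindex) (use inj_combinator[OF assms, of "\<lambda>_. UNIV"] in \<open>auto simp: split_def\<close>)
  then show ?thesis
    by (simp add: sum.cartesian_product)
qed

lemma cube_sum_insert:
  assumes "finite J" "a \<notin> J"
  shows "cube_sum (insert a J) w h =
    w True * cube_sum J w (\<lambda>y. h (y(a := True))) + w False * cube_sum J w (\<lambda>y. h (y(a := False)))"
proof -
  have weight: "(\<Prod>j\<in>insert a J. w ((y(a := b)) j)) = w b * (\<Prod>j\<in>J. w (y j))" for y b
  proof -
    have "(\<Prod>j\<in>J. w ((y(a := b)) j)) = (\<Prod>j\<in>J. w (y j))"
      by (rule prod.cong) (use assms in auto)
    then show ?thesis using assms by simp
  qed
  have "cube_sum (insert a J) w h = (\<Sum>b\<in>UNIV. w b * cube_sum J w (\<lambda>y. h (y(a := b))))"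
    unfolding cube_sum_def sum_PiE_bool_insert[OF assms(2)] weight
    by (simp add: sum_distrib_left mult.assoc)
  then show ?thesis
    by (simp add: UNIV_bool add.commute)
qed

lemma cube_sum_mono: "(\<And>x. h x \<le> h' x) \<Longrightarrow> cube_sum J w h \<le> cube_sum J w h'"
  unfolding cube_sum_def by (intro sum_mono mult_left_mono) auto

lemma chebyshev_two_point_ennreal:
  fixes \<alpha> \<beta> F0 F1 G0 G1 :: ennreal
  assumes "\<alpha> + \<beta> = 1" "F0 \<le> F1" "G1 \<le> G0"
  shows "\<alpha> * (F1 * G1) + \<beta> * (F0 * G0) \<le> (\<alpha> * F1 + \<beta> * F0) * (\<alpha> * G1 + \<beta> * G0)"
proof -
  obtain a where a: "F1 = F0 + a" using assms(2) by (metis le_iff_add)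
  obtain b where b: "G0 = G1 + b" using assms(3) by (metis le_iff_add)
  have "\<alpha> * (F1 * G1) + \<beta> * (F0 * G0) = (\<alpha> + \<beta>) * (\<alpha> * (F1 * G1) + \<beta> * (F0 * G0))"
    using assms(1) by simp
  also have "\<dots> = \<alpha>*\<alpha>*F1*G1 + \<alpha>*\<beta>*(F1*G1 + F0*G0) + \<beta>*\<beta>*F0*G0"
    by (simp add: algebra_simps)
  also have "\<dots> \<le> \<alpha>*\<alpha>*F1*G1 + \<alpha>*\<beta>*(F1*G0 + F0*G1) + \<beta>*\<beta>*F0*G0"
  proof -
    have "F1*G1 + F0*G0 \<le> F1*G0 + F0*G1"
      unfolding a b by (simp add: algebra_simps)
    then have "\<alpha>*\<beta>*(F1*G1 + F0*G0) \<le> \<alpha>*\<beta>*(F1*G0 + F0*G1)"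
      by (rule mult_left_mono) simp
    then show ?thesis
      by (intro add_mono) auto
  qed
  also have "\<dots> = (\<alpha> * F1 + \<beta> * F0) * (\<alpha> * G1 + \<beta> * G0)"
    by (simp add: algebra_simps)
  finally show ?thesis .
qed

theorem harris_cube_sum:
  fixes f g :: "('e \<Rightarrow> bool) \<Rightarrow> ennreal"
  assumes "finite J" "w True + w False = 1" "mono f" "antimono g"
  shows "cube_sum J w (\<lambda>x. f x * g x) \<le> cube_sum J w f * cube_sum J w g"
  using assms(1,3,4)
proof (induction J arbitrary: f g rule: finite_induct)
  case empty
  then show ?case by (simp add: cube_sum_def)
next
  case (insert a J)
  define f1 f0 g1 g0 where "f1 = (\<lambda>y. f (y(a := True)))" and "f0 = (\<lambda>y. f (y(a := False)))"
    and "g1 = (\<lambda>y. g (y(a := True)))" and "g0 = (\<lambda>y. g (y(a := False)))"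
  have upd_mono: "y(a := b) \<le> y'(a := b')" if "y \<le> y'" "b \<le> b'" for y y' :: "'e \<Rightarrow> bool" and b b'
    using that by (simp add: le_fun_def)
  have mono_f: "mono f1" "mono f0"
    unfolding f1_def f0_def
    by (intro monoI monoD[OF insert.prems(1)] upd_mono order_refl; assumption)+
  have antimono_g: "antimono g1" "antimono g0"
    unfolding g1_def g0_def
    by (intro antimonoI antimonoD[OF insert.prems(2)] upd_mono order_refl; assumption)+
  have flip: "y(a := False) \<le> y(a := True)" for y :: "'e \<Rightarrow> bool"
    by (simp add: upd_mono)
  have F: "cube_sum J w f0 \<le> cube_sum J w f1"
    unfolding f1_def f0_def by (intro cube_sum_mono monoD[OF insert.prems(1)] flip)
  have G: "cube_sum J w g1 \<le> cube_sum J w g0"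
    unfolding g1_def g0_def by (intro cube_sum_mono antimonoD[OF insert.prems(2)] flip)
  have "cube_sum (insert a J) w (\<lambda>x. f x * g x)
      = w True * cube_sum J w (\<lambda>y. f1 y * g1 y) + w False * cube_sum J w (\<lambda>y. f0 y * g0 y)"
    using insert.hyps by (simp add: cube_sum_insert f1_def f0_def g1_def g0_def)
  also have "\<dots> \<le> w True * (cube_sum J w f1 * cube_sum J w g1) + w False * (cube_sum J w f0 * cube_sum J w g0)"
    using insert.IH[OF mono_f(1) antimono_g(1)] insert.IH[OF mono_f(2) antimono_g(2)]
    by (intro add_mono mult_left_mono) auto
  also have "\<dots> \<le> (w True * cube_sum J w f1 + w False * cube_sum J w f0)
                * (w True * cube_sum J w g1 + w False * cube_sum J w g0)"
    by (rule chebyshev_two_point_ennreal[OF assms(2) F G])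
  also have "\<dots> = cube_sum (insert a J) w f * cube_sum (insert a J) w g"
    using insert.hyps by (simp add: cube_sum_insert f1_def f0_def g1_def g0_def)
  finally show ?case .
qed

lemma space_PiM_pmf: "space (PiM I (\<lambda>_. measure_pmf p)) = I \<rightarrow>\<^sub>E UNIV"
  by (simp add: space_PiM)

lemma sets_PiM_pmf_finite:
  fixes p :: "bool pmf"
  assumes "finite J" "B \<subseteq> space (PiM J (\<lambda>_. measure_pmf p))"
  shows "B \<in> sets (PiM J (\<lambda>_. measure_pmf p))"
proof -
  have singleton: "{x} \<in> sets (PiM J (\<lambda>_. measure_pmf p))" if "x \<in> J \<rightarrow>\<^sub>E UNIV" for x
  proof -
    have "{x} = PiE J (\<lambda>j. {x j})"
      using that by (intro PiE_singleton[symmetric]) (simp add: PiE_iff)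
    then show ?thesis
      using assms(1) by (simp add: sets_PiM_I_finite)
  qed
  have B: "B \<subseteq> J \<rightarrow>\<^sub>E UNIV"
    using assms(2) by (simp add: space_PiM_pmf)
  moreover from B have "finite B"
    using assms(1) by (rule finite_subset[OF _ finite_PiE]) simp
  ultimately have "(\<Union>x\<in>B. {x}) \<in> sets (PiM J (\<lambda>_. measure_pmf p))"
    using singleton by (intro sets.finite_UN) auto
  then show ?thesis by simp
qed

lemma nn_integral_PiM_pmf_local:
  fixes H :: "('e \<Rightarrow> bool) \<Rightarrow> ennreal" and p :: "bool pmf"
  assumes "finite J" "J \<subseteq> I" "\<And>\<omega>. H (restrict \<omega> J) = H \<omega>"
  shows "(\<integral>\<^sup>+\<omega>. H \<omega> \<partial>PiM I (\<lambda>_. measure_pmf p)) = cube_sum J (\<lambda>b. ennreal (pmf p b)) H"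
proof -
  interpret product_prob_space "\<lambda>_. measure_pmf p" I by unfold_locales
  let ?M = "\<lambda>_::'e. measure_pmf p"
  have "(\<integral>\<^sup>+\<omega>. H \<omega> \<partial>PiM I ?M) = (\<integral>\<^sup>+x. H x \<partial>distr (PiM I ?M) (PiM J ?M) (\<lambda>x. restrict x J))"
    using assms(3) by (subst nn_integral_distr)
      (simp_all add: measurable_restrict_subset[OF assms(2)] measurableI sets_PiM_pmf_finite[OF assms(1)])
  also have "\<dots> = (\<integral>\<^sup>+x. H x \<partial>PiM J ?M)"
    by (simp add: distr_PiM_restrict_finite[OF assms(1,2)])
  also have "\<dots> = (\<integral>\<^sup>+x. H x * indicator (J \<rightarrow>\<^sub>E UNIV) x \<partial>PiM J ?M)"
    by (rule nn_integral_cong) (simp add: space_PiM_pmf)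
  also have "\<dots> = (\<Sum>x \<in> J \<rightarrow>\<^sub>E UNIV. H x * emeasure (PiM J ?M) {x})"
    by (rule nn_integral_indicator_finite)
       (auto simp: assms(1) finite_PiE space_PiM_pmf intro!: sets_PiM_pmf_finite)
  also have "\<dots> = cube_sum J (\<lambda>b. ennreal (pmf p b)) H"
    unfolding cube_sum_def
  proof (rule sum.cong[OF refl])
    fix x assume "x \<in> J \<rightarrow>\<^sub>E (UNIV :: bool set)"
    then have "{x} = PiE J (\<lambda>j. {x j})" by (simp add: PiE_singleton PiE_iff)
    then have "emeasure (PiM J ?M) {x} = (\<Prod>j\<in>J. ennreal (pmf p (x j)))"
      using assms(1) by (simp add: emeasure_PiM emeasure_pmf_single)
    then show "H x * emeasure (PiM J ?M) {x} = (\<Prod>j\<in>J. ennreal (pmf p (x j))) * H x"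
      by (simp add: mult.commute)
  qed
  finally show ?thesis .
qed

lemma measurable_PiM_pmf_local:
  fixes H :: "('e \<Rightarrow> bool) \<Rightarrow> ennreal" and p :: "bool pmf"
  assumes "finite J" "J \<subseteq> I" "\<And>\<omega>. H (restrict \<omega> J) = H \<omega>"
  shows "H \<in> borel_measurable (PiM I (\<lambda>_. measure_pmf p))"
proof -
  have "(\<lambda>\<omega>. H (restrict \<omega> J)) \<in> borel_measurable (PiM I (\<lambda>_. measure_pmf p))"
    by (rule measurable_compose[OF measurable_restrict_subset[OF assms(2)]])
       (simp add: measurableI sets_PiM_pmf_finite[OF assms(1)])
  then show ?thesis by (simp add: assms(3))
qed

lemma sets_PiM_pmf_local:
  fixes p :: "bool pmf"
  assumes "finite J" "J \<subseteq> I" "\<And>\<omega>. Q (restrict \<omega> J) = Q \<omega>"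
  shows "{\<omega> \<in> space (PiM I (\<lambda>_. measure_pmf p)). Q \<omega>} \<in> sets (PiM I (\<lambda>_. measure_pmf p))"
proof -
  have "(\<lambda>\<omega>. indicator {\<omega>. Q \<omega>} \<omega> :: ennreal) \<in> borel_measurable (PiM I (\<lambda>_. measure_pmf p))"
    by (rule measurable_PiM_pmf_local[OF assms(1,2)]) (simp add: assms(3) indicator_def)
  from borel_measurable_indicator_iff[THEN iffD1, OF this] show ?thesis
    by (simp add: Int_def conj_commute)
qed

theorem harris_PiM_pmf:
  fixes f g :: "('e \<Rightarrow> bool) \<Rightarrow> ennreal" and p :: "bool pmf"
  assumes "finite J" "J \<subseteq> I" "mono f" "antimono g"
    and "\<And>\<omega>. f (restrict \<omega> J) = f \<omega>" "\<And>\<omega>. g (restrict \<omega> J) = g \<omega>"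
  shows "(\<integral>\<^sup>+\<omega>. f \<omega> * g \<omega> \<partial>PiM I (\<lambda>_. measure_pmf p))
           \<le> (\<integral>\<^sup>+\<omega>. f \<omega> \<partial>PiM I (\<lambda>_. measure_pmf p)) * (\<integral>\<^sup>+\<omega>. g \<omega> \<partial>PiM I (\<lambda>_. measure_pmf p))"
proof -
  have "ennreal (pmf p True) + ennreal (pmf p False) = 1"
    by (simp add: pmf_True_conv_False pmf_le_1 flip: ennreal_plus)
  with assms show ?thesis
    by (simp add: nn_integral_PiM_pmf_local harris_cube_sum)
qed

lemma path_len_Cons: "q \<noteq> [] \<Longrightarrow> path_len w (u # q) = w u (hd q) + path_len w q"
  by (cases q) (auto simp: path_len_def)

lemma path_len_append:
  assumes "p \<noteq> []" "q \<noteq> []" "last p = hd q"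
  shows "path_len w (p @ tl q) = path_len w p + path_len w q"
  using assms
proof (induction p)
  case Nil
  then show ?case by simp
next
  case (Cons u p)
  show ?case
  proof (cases "p = []")
    case True
    with Cons.prems show ?thesis by (cases q) (simp_all add: path_len_def)
  next
    case False
    with Cons show ?thesis by (simp add: path_len_Cons add.assoc)
  qed
qed

lemma path_len_rev:
  assumes "\<And>u v. w u v = w v u"
  shows "path_len w (rev p) = path_len w p"
proof (induction p)
  case Nil
  then show ?case by (simp add: path_len_def)
next
  case (Cons u p)
  show ?case
  proof (cases "p = []")
    case True
    then show ?thesis by (simp add: path_len_def)
  next
    case False
    have "path_len w (rev (u # p)) = path_len w (rev p @ tl [hd p, u])" by simp
    also have "\<dots> = path_len w p + w (hd p) u"
      using False Cons.IH by (subst path_len_append) (simp_all add: last_rev path_len_def)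
    also have "\<dots> = path_len w (u # p)"
      using False by (simp add: path_len_Cons assms add.commute)
    finally show ?thesis .
  qed
qed

definition path_dist :: "(int \<times> int \<Rightarrow> int \<times> int \<Rightarrow> ennreal) \<Rightarrow> int \<times> int \<Rightarrow> int \<times> int \<Rightarrow> ennreal" where
  "path_dist w u v = (INF p \<in> {p. p \<noteq> [] \<and> hd p = u \<and> last p = v}. path_len w p)"

lemma shortest_eq_path_dist: "shortest w n = path_dist w (0, 0) (int n, 0)"
  by (simp add: shortest_def path_dist_def)

lemma path_dist_le_path_len: "p \<noteq> [] \<Longrightarrow> path_dist w (hd p) (last p) \<le> path_len w p"
  unfolding path_dist_def by (rule INF_lower) simp

lemma path_dist_refl [simp]: "path_dist w u u = 0"
  using path_dist_le_path_len[of "[u]" w] by (simp add: path_len_def)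

lemma path_dist_le_weight: "path_dist w u v \<le> w u v"
  using path_dist_le_path_len[of "[u, v]" w] by (simp add: path_len_def)

lemma ennreal_INF_add_left:
  fixes f :: "'a \<Rightarrow> ennreal"
  shows "c + (INF i\<in>I. f i) = (INF i\<in>I. c + f i)"
proof (cases "I = {}")
  case False
  then show ?thesis
    using continuous_at_Inf_mono[of "\<lambda>x. c + x" "f ` I"]
      continuous_add[of "at_right (Inf (f ` I))" "\<lambda>x. c" "\<lambda>x. x"]
    by (auto simp: mono_def image_comp)
qed simp

lemma ennreal_INF_add_right:
  fixes f :: "'a \<Rightarrow> ennreal"
  shows "(INF i\<in>I. f i) + c = (INF i\<in>I. f i + c)"
  using ennreal_INF_add_left[of c f I] by (simp only: add.commute)

lemma path_dist_triangle: "path_dist w u v \<le> path_dist w u m + path_dist w m v"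
proof -
  let ?paths = "\<lambda>x y. {p. p \<noteq> [] \<and> hd p = x \<and> last p = y}"
  have concat: "path_dist w u v \<le> path_len w p + path_len w q" if "p \<in> ?paths u m" "q \<in> ?paths m v" for p q
  proof -
    have "path_dist w u v \<le> path_len w (p @ tl q)"
      using path_dist_le_path_len[of "p @ tl q" w] that by (cases q) auto
    also have "\<dots> = path_len w p + path_len w q"
      using that by (intro path_len_append) auto
    finally show ?thesis .
  qed
  have "path_dist w u v \<le> path_len w p + path_dist w m v" if "p \<in> ?paths u m" for p
  proof -
    have "path_dist w u v \<le> (INF q\<in>?paths m v. path_len w p + path_len w q)"
      using concat[OF that] by (blast intro: INF_greatest)
    then show ?thesis
      by (simp add: path_dist_def ennreal_INF_add_left)
  qed
  then have "path_dist w u v \<le> (INF p\<in>?paths u m. path_len w p + path_dist w m v)"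
    by (blast intro: INF_greatest)
  then show ?thesis
    by (simp add: path_dist_def ennreal_INF_add_right)
qed

lemma path_dist_sym:
  assumes "\<And>u v. w u v = w v u"
  shows "path_dist w u v = path_dist w v u"
proof -
  have "path_dist w x y \<le> path_dist w y x" for x y
    unfolding path_dist_def
  proof (rule INF_greatest)
    fix p assume "p \<in> {p. p \<noteq> [] \<and> hd p = y \<and> last p = x}"
    then show "(INF q\<in>{q. q \<noteq> [] \<and> hd q = x \<and> last q = y}. path_len w q) \<le> path_len w p"
      by (intro INF_lower2[of "rev p"]) (auto simp: hd_rev last_rev path_len_rev assms)
  qed
  then show ?thesis by (metis antisym)
qed

lemma path_dist_mono:
  assumes "\<And>u v. w u v \<le> w' u v"
  shows "path_dist w u v \<le> path_dist w' u v"
proof -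
  have "path_len w p \<le> path_len w' p" for p
    unfolding path_len_def by (rule sum_list_mono) (auto simp: assms)
  then show ?thesis
    unfolding path_dist_def by (intro INF_mono) blast
qed

lemma potential_le_path_dist:
  fixes \<Phi> :: "int \<times> int \<Rightarrow> ennreal"
  assumes "\<Phi> v = 0" "\<And>x y. w x y \<noteq> \<top> \<Longrightarrow> \<Phi> x \<le> w x y + \<Phi> y"
  shows "\<Phi> u \<le> path_dist w u v"
proof -
  have "\<Phi> (hd p) \<le> path_len w p + \<Phi> (last p)" if "p \<noteq> []" for p
    using that
  proof (induction p)
    case (Cons x p)
    show ?case
    proof (cases "p = []")
      case False
      have "\<Phi> x \<le> w x (hd p) + \<Phi> (hd p)"
        using assms(2) by (cases "w x (hd p) = \<top>") auto
      also have "\<dots> \<le> w x (hd p) + (path_len w p + \<Phi> (last p))"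
        using Cons.IH False by (intro add_left_mono) auto
      finally show ?thesis
        using False by (simp add: path_len_Cons add.assoc)
    qed (simp add: path_len_def)
  qed simp
  then show ?thesis
    unfolding path_dist_def using assms(1) by (intro INF_greatest) fastforce
qed

section \<open>Percolation distances on the event A\<close>

lemma path_dist_le_2: "w u m \<le> 1 \<Longrightarrow> w m v \<le> 1 \<Longrightarrow> path_dist w u v \<le> 2"
  using path_dist_le_path_len[of "[u, m, v]" w] add_mono[of "w u m" 1 "w m v" 1]
  by (simp add: path_len_def one_add_one)

lemma path_dist_le_3:
  assumes "w u m \<le> 1" "w m m' \<le> 1" "w m' v \<le> 1"
  shows "path_dist w u v \<le> 3"
proof -
  have "path_dist w u v \<le> w u m + (w m m' + w m' v)"
    using path_dist_le_path_len[of "[u, m, m', v]" w] by (simp add: path_len_def)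
  also have "\<dots> \<le> 1 + (1 + 1)"
    using assms by (intro add_mono) auto
  finally show ?thesis by simp
qed

lemma perc_w_sym: "perc_w K \<omega> u v = perc_w K \<omega> v u"
  unfolding perc_w_def by auto

definition at_most_one_closed :: "nat \<Rightarrow> nat \<Rightarrow> (bool \<times> int \<times> int \<Rightarrow> bool) \<Rightarrow> bool" where
  "at_most_one_closed K n \<omega> \<longleftrightarrow> (\<forall>i j. 0 \<le> i \<and> i < int n \<and> - int K \<le> j \<and> j < int K \<longrightarrow>
       card {e \<in> square_edges i j. \<not> \<omega> e} \<le> 1)"

lemma at_most_one_closed_square:
  assumes "at_most_one_closed K n \<omega>" "0 \<le> i" "i < int n" "- int K \<le> j" "j < int K"
    and "e \<in> square_edges i j" "e' \<in> square_edges i j" "e \<noteq> e'"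
  shows "\<omega> e \<or> \<omega> e'"
proof (rule ccontr)
  assume "\<not> (\<omega> e \<or> \<omega> e')"
  then have "{e, e'} \<subseteq> {e \<in> square_edges i j. \<not> \<omega> e}"
    using assms(6,7) by auto
  then have "card {e, e'} \<le> card {e \<in> square_edges i j. \<not> \<omega> e}"
    by (rule card_mono[rotated]) (simp add: square_edges_def)
  also have "\<dots> \<le> 1"
    using assms(1-5) unfolding at_most_one_closed_def by blast
  finally show False
    using assms(8) by simp
qed

lemma path_dist_perc_square_diagonals:
  assumes "at_most_one_closed K n \<omega>" "0 \<le> i" "i < int n" "- int K \<le> j" "j < int K"
  shows "path_dist (perc_w K \<omega>) (i, j) (i + 1, j + 1) \<le> 2"
    and "path_dist (perc_w K \<omega>) (i + 1, j) (i, j + 1) \<le> 2"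
proof -
  note open_edge = at_most_one_closed_square[OF assms]
  have "(\<omega> (True, i, j) \<and> \<omega> (False, i + 1, j)) \<or> (\<omega> (False, i, j) \<and> \<omega> (True, i, j + 1))"
    using open_edge[of "(True, i, j)" "(False, i, j)"] open_edge[of "(True, i, j)" "(True, i, j + 1)"]
      open_edge[of "(False, i + 1, j)" "(False, i, j)"] open_edge[of "(False, i + 1, j)" "(True, i, j + 1)"]
    by (auto simp: square_edges_def)
  then show "path_dist (perc_w K \<omega>) (i, j) (i + 1, j + 1) \<le> 2"
  proof (elim disjE conjE)
    assume "\<omega> (True, i, j)" "\<omega> (False, i + 1, j)"
    then show ?thesis
      using assms(4,5) by (intro path_dist_le_2[where m = "(i + 1, j)"]) (auto simp: perc_w_def in_strip_def)
  next
    assume "\<omega> (False, i, j)" "\<omega> (True, i, j + 1)"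
    then show ?thesis
      using assms(4,5) by (intro path_dist_le_2[where m = "(i, j + 1)"]) (auto simp: perc_w_def in_strip_def)
  qed
  have "(\<omega> (True, i, j) \<and> \<omega> (False, i, j)) \<or> (\<omega> (False, i + 1, j) \<and> \<omega> (True, i, j + 1))"
    using open_edge[of "(True, i, j)" "(False, i + 1, j)"] open_edge[of "(True, i, j)" "(True, i, j + 1)"]
      open_edge[of "(False, i, j)" "(False, i + 1, j)"] open_edge[of "(False, i, j)" "(True, i, j + 1)"]
    by (auto simp: square_edges_def)
  then show "path_dist (perc_w K \<omega>) (i + 1, j) (i, j + 1) \<le> 2"
  proof (elim disjE conjE)
    assume "\<omega> (True, i, j)" "\<omega> (False, i, j)"
    then show ?thesis
      using assms(4,5) by (intro path_dist_le_2[where m = "(i, j)"]) (auto simp: perc_w_def in_strip_def)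
  next
    assume "\<omega> (False, i + 1, j)" "\<omega> (True, i, j + 1)"
    then show ?thesis
      using assms(4,5) by (intro path_dist_le_2[where m = "(i + 1, j + 1)"]) (auto simp: perc_w_def in_strip_def)
  qed
qed

lemma path_dist_perc_diagonal:
  assumes "at_most_one_closed K n \<omega>"
    and "0 \<le> a" "a \<le> int n" "0 \<le> a'" "a' \<le> int n" "\<bar>a - a'\<bar> = 1"
    and "- int K \<le> b" "b \<le> int K" "- int K \<le> b'" "b' \<le> int K" "\<bar>b - b'\<bar> = 1"
  shows "path_dist (perc_w K \<omega>) (a, b) (a', b') \<le> 2"
proof -
  define i j where "i = min a a'" and "j = min b b'"
  have square: "0 \<le> i" "i < int n" "- int K \<le> j" "j < int K"
    using assms(2-11) by (auto simp: i_def j_def)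
  note diagonal = path_dist_perc_square_diagonals[OF assms(1) square]
  note sym = path_dist_sym[OF perc_w_sym]
  consider "a' = a + 1" "b' = b + 1" | "a' = a + 1" "b = b' + 1" | "a = a' + 1" "b' = b + 1"
    | "a = a' + 1" "b = b' + 1"
    using assms(6,11) by linarith
  then show ?thesis
    by cases (use diagonal sym in \<open>simp_all add: i_def j_def\<close>)
qed

lemma path_dist_perc_vertical:
  assumes "at_most_one_closed K n \<omega>" "1 \<le> n" "0 \<le> i" "i \<le> int n" "- int K \<le> j" "j < int K"
  shows "path_dist (perc_w K \<omega>) (i, j) (i, j + 1) \<le> 3"
proof (cases "\<omega> (False, i, j)")
  case True
  then have "perc_w K \<omega> (i, j) (i, j + 1) = 1"
    using assms(5,6) by (simp add: perc_w_def in_strip_def)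
  then have "path_dist (perc_w K \<omega>) (i, j) (i, j + 1) \<le> 1"
    using path_dist_le_weight[of "perc_w K \<omega>" "(i, j)" "(i, j + 1)"] by simp
  also have "(1 :: ennreal) \<le> 3"
    by simp
  finally show ?thesis .
next
  case closed: False
  show ?thesis
  proof (cases "i < int n")
    case True
    note open_edge = at_most_one_closed_square[OF assms(1,3) True assms(5,6), of "(False, i, j)"]
    have "\<omega> (True, i, j)" "\<omega> (False, i + 1, j)" "\<omega> (True, i, j + 1)"
      using open_edge closed by (auto simp: square_edges_def)
    then show ?thesis
      using assms(5,6)
      by (intro path_dist_le_3[where m = "(i + 1, j)" and m' = "(i + 1, j + 1)"])
         (auto simp: perc_w_def in_strip_def)
  next
    case False
    then have left: "0 \<le> i - 1" "i - 1 < int n"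
      using assms(2,4) by auto
    note open_edge = at_most_one_closed_square[OF assms(1) left assms(5,6), of "(False, i, j)"]
    have "\<omega> (True, i - 1, j)" "\<omega> (False, i - 1, j)" "\<omega> (True, i - 1, j + 1)"
      using open_edge closed by (auto simp: square_edges_def)
    then show ?thesis
      using assms(5,6)
      by (intro path_dist_le_3[where m = "(i - 1, j)" and m' = "(i - 1, j + 1)"])
         (auto simp: perc_w_def in_strip_def)
  qed
qed

lemma path_dist_perc_column:
  assumes "at_most_one_closed K n \<omega>" "1 \<le> n" "0 \<le> i" "i \<le> int n" "\<bar>j\<bar> \<le> int K"
  shows "path_dist (perc_w K \<omega>) (i, 0) (i, j) \<le> 3 * of_nat (nat \<bar>j\<bar>)"
proof -
  note step = path_dist_perc_vertical[OF assms(1-4)]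
  have "path_dist (perc_w K \<omega>) (i, 0) (i, j) \<le> 3 * of_nat m" if "nat \<bar>j\<bar> = m" "\<bar>j\<bar> \<le> int K" for j m
    using that
  proof (induction m arbitrary: j)
    case 0
    then show ?case by simp
  next
    case (Suc m)
    define j0 where "j0 = j - sgn j"
    have j0: "nat \<bar>j0\<bar> = m" "\<bar>j0\<bar> \<le> int K"
      using Suc.prems by (auto simp: j0_def sgn_if)
    have "path_dist (perc_w K \<omega>) (i, j0) (i, j) \<le> 3"
    proof (cases "j > 0")
      case True
      then show ?thesis
        using step[of j0] Suc.prems by (simp add: j0_def)
    next
      case False
      then show ?thesis
        using step[of j] Suc.prems path_dist_sym[OF perc_w_sym] by (simp add: j0_def sgn_if)
    qed
    then have "path_dist (perc_w K \<omega>) (i, 0) (i, j) \<le> 3 * of_nat m + 3"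
      using path_dist_triangle[of "perc_w K \<omega>" "(i, 0)" "(i, j)" "(i, j0)"] Suc.IH[OF j0]
      by (meson add_mono order_trans)
    then show ?case
      by (simp add: distrib_left add.commute)
  qed
  then show ?thesis using assms(5) by blast
qed

section \<open>Comparison with the Cross Model\<close>

lemma cross_w_finite:
  assumes "cross_w K \<omega> (a, b) (a', b') \<noteq> \<top>"
  shows "in_strip K (a, b)" "in_strip K (a', b')" "\<bar>a - a'\<bar> \<le> 1" "\<bar>b - b'\<bar> \<le> 1"
    and "1 \<le> cross_w K \<omega> (a, b) (a', b')"
  using assms by (auto simp: cross_w_def split: if_splits)

lemma cross_w_column_change:
  assumes "cross_w K \<omega> (a, b) (a', b') \<noteq> \<top>" "a \<noteq> a'"
  shows "cross_w K \<omega> (a, b) (a', b') = 1 + of_nat (nat \<bar>b - b'\<bar>)"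
    and "b = b' \<Longrightarrow> perc_w K \<omega> (a, b) (a', b') = 1"
proof -
  have "nat \<bar>b - b'\<bar> = (if b = b' then 0 else 1)"
    using cross_w_finite(4)[OF assms(1)] by auto
  then show "cross_w K \<omega> (a, b) (a', b') = 1 + of_nat (nat \<bar>b - b'\<bar>)"
    using assms by (auto simp: cross_w_def one_add_one split: if_splits)
  show "b = b' \<Longrightarrow> perc_w K \<omega> (a, b) (a', b') = 1"
    using assms by (auto simp: cross_w_def perc_w_def split: if_splits)
qed

lemma cross_w_vertical:
  "in_strip K (a, b) \<Longrightarrow> in_strip K (a, b') \<Longrightarrow> \<bar>b - b'\<bar> = 1 \<Longrightarrow> cross_w K \<omega> (a, b) (a, b') = 1"
  by (auto simp: cross_w_def abs_eq_iff)

text \<open>Cross paths may leave the columns [0,n] of the box; they are projected onto them.\<close>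

definition clamp :: "nat \<Rightarrow> int \<Rightarrow> int" where
  "clamp n a = max 0 (min (int n) a)"

lemma clamp_neq:
  assumes "\<bar>a - a'\<bar> \<le> 1" "clamp n a \<noteq> clamp n a'"
  shows "clamp n a = a" "clamp n a' = a'" "0 \<le> a" "a \<le> int n" "0 \<le> a'" "a' \<le> int n" "\<bar>a - a'\<bar> = 1"
  using assms by (auto simp: clamp_def)

lemma row_shift:
  fixes b b' j :: int
  assumes "- int K \<le> b" "b \<le> int K" "- int K \<le> j" "j \<le> int K"
    and "\<bar>b - b'\<bar> \<le> 1" "\<not> (j = b \<and> b = b')" "- int K \<le> b'" "b' \<le> int K"
  obtains j' where "- int K \<le> j'" "j' \<le> int K" "\<bar>j' - j\<bar> = 1" "1 + \<bar>j' - b\<bar> \<le> \<bar>b - b'\<bar> + \<bar>j - b'\<bar>"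
proof -
  consider "b < j" | "j < b" | "j = b" "- int K \<le> 2 * b - b'" "2 * b - b' \<le> int K" | "j = b" "b \<noteq> b'"
    using assms(6) by linarith
  then show ?thesis
  proof cases
    case 1
    then show ?thesis using assms by (intro that[of "j - 1"]) auto
  next
    case 2
    then show ?thesis using assms by (intro that[of "j + 1"]) auto
  next
    case 3
    then show ?thesis using assms by (intro that[of "2 * b - b'"]) auto
  next
    case 4
    then show ?thesis using assms by (intro that[of b']) (auto simp: abs_if)
  qed
qed

definition perc_potential :: "nat \<Rightarrow> nat \<Rightarrow> (bool \<times> int \<times> int \<Rightarrow> bool) \<Rightarrow> int \<times> int \<Rightarrow> int \<times> int \<Rightarrow> ennreal" where
  "perc_potential K n \<omega> v u =
     Min ((\<lambda>j. path_dist (perc_w K \<omega>) (clamp n (fst u), j) v + of_nat (nat \<bar>j - snd u\<bar>)) ` {- int K..int K})"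

lemma perc_potential_le:
  "- int K \<le> j \<Longrightarrow> j \<le> int K \<Longrightarrow>
    perc_potential K n \<omega> v u \<le> path_dist (perc_w K \<omega>) (clamp n (fst u), j) v + of_nat (nat \<bar>j - snd u\<bar>)"
  unfolding perc_potential_def by (rule Min_le) auto

lemma perc_potential_attained:
  obtains j where "- int K \<le> j" "j \<le> int K"
    "perc_potential K n \<omega> v u = path_dist (perc_w K \<omega>) (clamp n (fst u), j) v + of_nat (nat \<bar>j - snd u\<bar>)"
proof -
  have "perc_potential K n \<omega> v u
      \<in> (\<lambda>j. path_dist (perc_w K \<omega>) (clamp n (fst u), j) v + of_nat (nat \<bar>j - snd u\<bar>)) ` {- int K..int K}"
    unfolding perc_potential_def by (rule Min_in) auto
  then show ?thesis using that by auto
qed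

lemma cross_column_step_shadow:
  assumes good: "at_most_one_closed K n \<omega>" and finite: "cross_w K \<omega> (a, b) (a', b') \<noteq> \<top>"
    and columns: "0 \<le> a" "a \<le> int n" "0 \<le> a'" "a' \<le> int n" "\<bar>a - a'\<bar> = 1"
    and j: "- int K \<le> j" "j \<le> int K"
  obtains j' where "- int K \<le> j'" "j' \<le> int K"
    "path_dist (perc_w K \<omega>) (a, j') (a', j) + of_nat (nat \<bar>j' - b\<bar>)
       \<le> cross_w K \<omega> (a, b) (a', b') + of_nat (nat \<bar>j - b'\<bar>)"
proof -
  let ?S = "cross_w K \<omega> (a, b) (a', b')"
  note step = cross_w_finite[OF finite]
  have rows: "- int K \<le> b" "b \<le> int K" "- int K \<le> b'" "b' \<le> int K"
    using step(1,2) by (auto simp: in_strip_def)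
  have S: "?S = 1 + of_nat (nat \<bar>b - b'\<bar>)"
    using cross_w_column_change(1)[OF finite] columns(5) by auto
  \<comment> \<open>Use the open horizontal edge itself if already on its row, else cross a square diagonally.\<close>
  show ?thesis
  proof (cases "j = b \<and> b = b'")
    case True
    have "path_dist (perc_w K \<omega>) (a, b) (a', b) \<le> 1"
      using path_dist_le_weight[of "perc_w K \<omega>" "(a, b)" "(a', b)"]
        cross_w_column_change(2)[OF finite] columns(5) True by auto
    then show ?thesis
      using True rows S by (intro that[of b]) auto
  next
    case False
    obtain j' where j': "- int K \<le> j'" "j' \<le> int K" "\<bar>j' - j\<bar> = 1"
      "1 + \<bar>j' - b\<bar> \<le> \<bar>b - b'\<bar> + \<bar>j - b'\<bar>"
      using row_shift[OF rows(1,2) j step(4) False rows(3,4)] by blast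
    have "path_dist (perc_w K \<omega>) (a, j') (a', j) \<le> 2"
      using path_dist_perc_diagonal[OF good columns j'(1,2) j j'(3)] .
    then have "path_dist (perc_w K \<omega>) (a, j') (a', j) + of_nat (nat \<bar>j' - b\<bar>)
        \<le> of_nat (2 + nat \<bar>j' - b\<bar>)"
      by (simp add: add_right_mono)
    also have "\<dots> \<le> of_nat (1 + nat \<bar>b - b'\<bar> + nat \<bar>j - b'\<bar>)"
      using j'(4) by (intro of_nat_mono) linarith
    also have "\<dots> = ?S + of_nat (nat \<bar>j - b'\<bar>)"
      by (simp add: S)
    finally show ?thesis
      using j' by (intro that[of j'])
  qed
qed

lemma cross_step_shadow:
  assumes good: "at_most_one_closed K n \<omega>" and finite: "cross_w K \<omega> (a, b) (a', b') \<noteq> \<top>"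
    and j: "- int K \<le> j" "j \<le> int K"
  obtains j' where "- int K \<le> j'" "j' \<le> int K"
    "path_dist (perc_w K \<omega>) (clamp n a, j') (clamp n a', j) + of_nat (nat \<bar>j' - b\<bar>)
       \<le> cross_w K \<omega> (a, b) (a', b') + of_nat (nat \<bar>j - b'\<bar>)"
proof (cases "clamp n a = clamp n a'")
  case True
  note step = cross_w_finite[OF finite]
  have "(of_nat (nat \<bar>j - b\<bar>) :: ennreal) \<le> of_nat (1 + nat \<bar>j - b'\<bar>)"
    using step(4) by (intro of_nat_mono) linarith
  also have "\<dots> \<le> cross_w K \<omega> (a, b) (a', b') + of_nat (nat \<bar>j - b'\<bar>)"
    using step(5) by (simp add: add_right_mono)
  finally show ?thesis
    using True j by (intro that[of j]) auto
next
  case False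
  note columns = clamp_neq[OF cross_w_finite(3)[OF finite] False]
  obtain j' where "- int K \<le> j'" "j' \<le> int K"
    "path_dist (perc_w K \<omega>) (a, j') (a', j) + of_nat (nat \<bar>j' - b\<bar>)
       \<le> cross_w K \<omega> (a, b) (a', b') + of_nat (nat \<bar>j - b'\<bar>)"
    using cross_column_step_shadow[OF good finite columns(3-7) j] by blast
  then show ?thesis
    using columns(1,2) by (intro that[of j']) simp_all
qed

lemma perc_potential_step:
  assumes good: "at_most_one_closed K n \<omega>" and finite: "cross_w K \<omega> u u' \<noteq> \<top>"
  shows "perc_potential K n \<omega> v u \<le> cross_w K \<omega> u u' + perc_potential K n \<omega> v u'"
proof -
  obtain a b a' b' where uu': "u = (a, b)" "u' = (a', b')" by fastforce
  obtain j where j: "- int K \<le> j" "j \<le> int K"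
    and min: "perc_potential K n \<omega> v (a', b') = path_dist (perc_w K \<omega>) (clamp n a', j) v + of_nat (nat \<bar>j - b'\<bar>)"
    using perc_potential_attained[of K n \<omega> v "(a', b')"] by auto
  obtain j' where j': "- int K \<le> j'" "j' \<le> int K"
    and shadow: "path_dist (perc_w K \<omega>) (clamp n a, j') (clamp n a', j) + of_nat (nat \<bar>j' - b\<bar>)
       \<le> cross_w K \<omega> (a, b) (a', b') + of_nat (nat \<bar>j - b'\<bar>)"
    using cross_step_shadow[OF good finite[unfolded uu'] j] by blast
  have "perc_potential K n \<omega> v (a, b) \<le> path_dist (perc_w K \<omega>) (clamp n a, j') v + of_nat (nat \<bar>j' - b\<bar>)"
    using perc_potential_le[OF j', of n \<omega> v "(a, b)"] by simp
  also have "\<dots> \<le> (path_dist (perc_w K \<omega>) (clamp n a, j') (clamp n a', j) + of_nat (nat \<bar>j' - b\<bar>))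
                  + path_dist (perc_w K \<omega>) (clamp n a', j) v"
    using path_dist_triangle[of "perc_w K \<omega>" "(clamp n a, j')" v "(clamp n a', j)"]
    by (simp add: add_right_mono ac_simps)
  also have "\<dots> \<le> cross_w K \<omega> (a, b) (a', b') + perc_potential K n \<omega> v (a', b')"
    using add_right_mono[OF shadow] by (simp add: min ac_simps)
  finally show ?thesis
    unfolding uu' .
qed

theorem perc_dist_le_cross_dist:
  assumes good: "at_most_one_closed K n \<omega>"
  shows "perc_dist K n \<omega> \<le> cross_dist K n \<omega> + 3 * of_nat K"
proof (cases "n = 0")
  case True
  then show ?thesis by (simp add: perc_dist_def shortest_eq_path_dist)
next
  case False
  let ?v = "(int n, 0)"
  have "perc_potential K n \<omega> ?v ?v \<le> 0"
    using perc_potential_le[of K 0 n \<omega> ?v ?v] by (simp add: clamp_def)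
  then have potential: "perc_potential K n \<omega> ?v (0, 0) \<le> cross_dist K n \<omega>"
    unfolding cross_dist_def shortest_eq_path_dist
    by (intro potential_le_path_dist perc_potential_step[OF good]) simp_all
  obtain j where j: "- int K \<le> j" "j \<le> int K"
    and min: "perc_potential K n \<omega> ?v (0, 0) = path_dist (perc_w K \<omega>) (0, j) ?v + of_nat (nat \<bar>j\<bar>)"
    using perc_potential_attained[of K n \<omega> ?v "(0, 0)"] by (auto simp: clamp_def)
  have "perc_dist K n \<omega> \<le> path_dist (perc_w K \<omega>) (0, 0) (0, j) + path_dist (perc_w K \<omega>) (0, j) ?v"
    unfolding perc_dist_def shortest_eq_path_dist by (rule path_dist_triangle)
  also have "\<dots> \<le> 3 * of_nat (nat \<bar>j\<bar>) + path_dist (perc_w K \<omega>) (0, j) ?v"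
    using good False j by (intro add_right_mono path_dist_perc_column) auto
  also have "\<dots> \<le> 3 * of_nat K + perc_potential K n \<omega> ?v (0, 0)"
    unfolding min using j by (intro add_mono mult_left_mono of_nat_mono) auto
  also have "\<dots> \<le> 3 * of_nat K + cross_dist K n \<omega>"
    using potential by (rule add_left_mono)
  finally show ?thesis
    by (simp add: add.commute)
qed

definition box_horiz_edges :: "nat \<Rightarrow> nat \<Rightarrow> (bool \<times> int \<times> int) set" where
  "box_horiz_edges K n = (\<lambda>(i, j). (True, i, j)) ` ({0..<int n} \<times> {- int K..int K})"

definition box_edges :: "nat \<Rightarrow> nat \<Rightarrow> (bool \<times> int \<times> int) set" where
  "box_edges K n = box_horiz_edges K n \<union> (\<lambda>(i, j). (False, i, j)) ` ({0..int n} \<times> {- int K..<int K})"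

lemma finite_box_edges: "finite (box_edges K n)"
  by (simp add: box_edges_def box_horiz_edges_def)

lemma box_horiz_edges_subset: "box_horiz_edges K n \<subseteq> box_edges K n" "box_horiz_edges K n \<subseteq> horiz_edges K"
  by (auto simp: box_edges_def box_horiz_edges_def horiz_edges_def)

lemma box_edges_subset_strip_edges: "box_edges K n \<subseteq> strip_edges K"
  by (auto simp: box_edges_def box_horiz_edges_def strip_edges_def)

lemma cross_w_agree:
  assumes agree: "\<forall>e\<in>box_horiz_edges K n. \<omega> e = \<omega>' e"
    and "0 \<le> a" "a \<le> int n" "0 \<le> a'" "a' \<le> int n"
  shows "cross_w K \<omega> (a, b) (a', b') = cross_w K \<omega>' (a, b) (a', b')"
proof -
  have "in_strip K (a, b) \<Longrightarrow> a' = a + 1 \<Longrightarrow> \<omega> (True, a, b) = \<omega>' (True, a, b)"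
    and "in_strip K (a', b') \<Longrightarrow> a = a' + 1 \<Longrightarrow> \<omega> (True, a', b') = \<omega>' (True, a', b')"
    using agree assms(2-5) by (auto simp: box_horiz_edges_def in_strip_def)
  then show ?thesis
    unfolding cross_w_def by (intro if_cong refl) auto
qed

lemma path_dist_cross_clamped_step:
  assumes agree: "\<forall>e\<in>box_horiz_edges K n. \<omega> e = \<omega>' e"
    and finite: "cross_w K \<omega>' (a, b) (a', b') \<noteq> \<top>"
  shows "path_dist (cross_w K \<omega>) (clamp n a, b) (clamp n a', b') \<le> cross_w K \<omega>' (a, b) (a', b')"
proof -
  note step = cross_w_finite[OF finite]
  consider "clamp n a = clamp n a'" "b = b'" | "clamp n a = clamp n a'" "b \<noteq> b'"
    | "clamp n a \<noteq> clamp n a'"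
    by blast
  then show ?thesis
  proof cases
    case 2
    have "cross_w K \<omega> (clamp n a, b) (clamp n a, b') = 1"
      using step(1,2,4) 2(2) by (intro cross_w_vertical) (auto simp: in_strip_def)
    then have "cross_w K \<omega> (clamp n a, b) (clamp n a', b') = 1"
      using 2(1) by simp
    then show ?thesis
      using path_dist_le_weight[of "cross_w K \<omega>" "(clamp n a, b)" "(clamp n a', b')"] step(5)
      by simp
  next
    case 3
    note columns = clamp_neq[OF step(3) this]
    show ?thesis
      using path_dist_le_weight[of "cross_w K \<omega>" "(a, b)" "(a', b')"]
        cross_w_agree[OF agree columns(3-6)] columns(1,2) by simp
  qed simp
qed

lemma cross_dist_le_of_agree:
  assumes agree: "\<forall>e\<in>box_horiz_edges K n. \<omega> e = \<omega>' e"
  shows "cross_dist K n \<omega> \<le> cross_dist K n \<omega>'"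
proof -
  let ?v = "(int n, 0)"
  define \<Phi> where "\<Phi> u = path_dist (cross_w K \<omega>) (clamp n (fst u), snd u) ?v" for u
  have "\<Phi> x \<le> cross_w K \<omega>' x y + \<Phi> y" if "cross_w K \<omega>' x y \<noteq> \<top>" for x y
  proof -
    obtain a b a' b' where xy: "x = (a, b)" "y = (a', b')" by fastforce
    have "\<Phi> x \<le> path_dist (cross_w K \<omega>) (clamp n a, b) (clamp n a', b') + \<Phi> y"
      unfolding \<Phi>_def xy by (simp add: path_dist_triangle)
    also have "\<dots> \<le> cross_w K \<omega>' x y + \<Phi> y"
      using path_dist_cross_clamped_step[OF agree] that unfolding xy by (simp add: add_right_mono)
    finally show ?thesis .
  qed
  then have "\<Phi> (0, 0) \<le> path_dist (cross_w K \<omega>') (0, 0) ?v"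
    by (intro potential_le_path_dist) (simp_all add: \<Phi>_def clamp_def)
  then show ?thesis
    by (simp add: \<Phi>_def clamp_def cross_dist_def shortest_eq_path_dist)
qed

lemma cross_dist_restrict:
  "box_horiz_edges K n \<subseteq> J \<Longrightarrow> cross_dist K n (restrict \<omega> J) = cross_dist K n \<omega>"
  by (intro antisym cross_dist_le_of_agree) auto

lemma at_most_one_closed_restrict:
  "box_edges K n \<subseteq> J \<Longrightarrow> at_most_one_closed K n (restrict \<omega> J) = at_most_one_closed K n \<omega>"
proof -
  assume J: "box_edges K n \<subseteq> J"
  have "{e \<in> square_edges i j. \<not> restrict \<omega> J e} = {e \<in> square_edges i j. \<not> \<omega> e}"
    if "0 \<le> i" "i < int n" "- int K \<le> j" "j < int K" for i j
  proof -
    have "square_edges i j \<subseteq> J"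
      using that J by (auto simp: square_edges_def box_edges_def box_horiz_edges_def)
    then show ?thesis by auto
  qed
  then show ?thesis
    unfolding at_most_one_closed_def by auto
qed

lemma cross_w_antimono:
  assumes "\<omega> \<le> \<omega>'"
  shows "cross_w K \<omega>' u v \<le> cross_w K \<omega> u v"
proof -
  have if_le: "(if Q then 1 else X) \<le> (if P then 1 else X)" if "P \<Longrightarrow> Q" "1 \<le> X" for P Q and X :: ennreal
    using that by auto
  have "\<omega> e \<Longrightarrow> \<omega>' e" for e
    using assms by (metis le_boolD le_funD)
  then show ?thesis
    unfolding cross_w_def by (intro if_le) (blast, simp)
qed

lemma antimono_cross_dist: "antimono (cross_dist K n)"
  by (auto intro!: antimonoI path_dist_mono cross_w_antimono simp: cross_dist_def shortest_eq_path_dist)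

lemma mono_at_most_one_closed: "mono (at_most_one_closed K n)"
proof (rule monoI)
  fix \<omega> \<omega>' :: "bool \<times> int \<times> int \<Rightarrow> bool"
  assume "\<omega> \<le> \<omega>'"
  then have "card {e \<in> square_edges i j. \<not> \<omega>' e} \<le> card {e \<in> square_edges i j. \<not> \<omega> e}" for i j
    by (intro card_mono) (auto simp: square_edges_def le_fun_def)
  then show "at_most_one_closed K n \<omega> \<le> at_most_one_closed K n \<omega>'"
    unfolding at_most_one_closed_def le_bool_def by (meson order_trans)
qed

lemma event_A_eq: "event_A K \<epsilon> n = {\<omega> \<in> space (perc_space K \<epsilon>). at_most_one_closed K n \<omega>}"
  by (simp add: event_A_def at_most_one_closed_def)

lemma sets_event_A: "event_A K \<epsilon> n \<in> sets (perc_space K \<epsilon>)"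
  unfolding event_A_eq perc_space_def
  by (rule sets_PiM_pmf_local[of "box_edges K n"])
     (simp_all add: finite_box_edges box_edges_subset_strip_edges at_most_one_closed_restrict)

lemma nn_integral_cross_dist_perc_space:
  "(\<integral>\<^sup>+\<omega>. cross_dist K n \<omega> \<partial>perc_space K \<epsilon>) = (\<integral>\<^sup>+\<omega>. cross_dist K n \<omega> \<partial>cross_space K \<epsilon>)"
proof -
  have "finite (box_horiz_edges K n)" "box_horiz_edges K n \<subseteq> strip_edges K"
    using order_trans[OF box_horiz_edges_subset(1) box_edges_subset_strip_edges]
    by (simp_all add: box_horiz_edges_def)
  then show ?thesis
    unfolding perc_space_def cross_space_def
    by (simp add: nn_integral_PiM_pmf_local cross_dist_restrict box_horiz_edges_subset(2))
qed

lemma harris_cross_dist_event_A: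
  "(\<integral>\<^sup>+\<omega>. cross_dist K n \<omega> * indicator (event_A K \<epsilon> n) \<omega> \<partial>perc_space K \<epsilon>)
     \<le> (\<integral>\<^sup>+\<omega>. cross_dist K n \<omega> \<partial>cross_space K \<epsilon>) * emeasure (perc_space K \<epsilon>) (event_A K \<epsilon> n)"
proof -
  let ?P = "perc_space K \<epsilon>" and ?good = "indicator {\<omega>. at_most_one_closed K n \<omega>} :: _ \<Rightarrow> ennreal"
  have indicator_A: "indicator (event_A K \<epsilon> n) \<omega> = ?good \<omega>" if "\<omega> \<in> space ?P" for \<omega>
    using that by (simp add: event_A_eq indicator_def)
  have mono_good: "mono ?good"
    using mono_at_most_one_closed[of K n] by (auto simp: mono_def indicator_def le_bool_def)
  have "(\<integral>\<^sup>+\<omega>. cross_dist K n \<omega> * indicator (event_A K \<epsilon> n) \<omega> \<partial>?P)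
      = (\<integral>\<^sup>+\<omega>. ?good \<omega> * cross_dist K n \<omega> \<partial>?P)"
    by (rule nn_integral_cong) (simp add: indicator_A mult.commute)
  also have "\<dots> \<le> (\<integral>\<^sup>+\<omega>. ?good \<omega> \<partial>?P) * (\<integral>\<^sup>+\<omega>. cross_dist K n \<omega> \<partial>?P)"
    unfolding perc_space_def
    by (intro harris_PiM_pmf[of "box_edges K n"] antimono_cross_dist mono_good)
       (simp_all add: finite_box_edges box_edges_subset_strip_edges at_most_one_closed_restrict
         cross_dist_restrict box_horiz_edges_subset indicator_def)
  also have "(\<integral>\<^sup>+\<omega>. ?good \<omega> \<partial>?P) = emeasure ?P (event_A K \<epsilon> n)"
    by (simp add: nn_integral_cong[OF indicator_A, symmetric] sets_event_A)
  finally show ?thesis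
    by (simp add: nn_integral_cross_dist_perc_space mult.commute)
qed

lemma ennreal_divide_le_of_le_mult: "z \<le> y * x \<Longrightarrow> z / x \<le> (y :: ennreal)"
  by (cases "x = 0") (auto intro!: divide_le_posI_ennreal gr_zeroI simp: mult.commute)

theorem proposition7:
  fixes K n :: nat and \<epsilon> :: real
  assumes "K \<ge> 1" and "0 < \<epsilon>" and "\<epsilon> < 1"
  shows "(\<integral>\<^sup>+ \<omega>. perc_dist K n \<omega> * indicator (event_A K \<epsilon> n) \<omega> \<partial>perc_space K \<epsilon>)
            / emeasure (perc_space K \<epsilon>) (event_A K \<epsilon> n)
         \<le> (\<integral>\<^sup>+ \<omega>. cross_dist K n \<omega> \<partial>cross_space K \<epsilon>) + 3 * of_nat K"
proof (rule ennreal_divide_le_of_le_mult)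
  let ?P = "perc_space K \<epsilon>" and ?A = "event_A K \<epsilon> n" and ?C = "cross_dist K n"
  have C_measurable: "?C \<in> borel_measurable ?P"
    unfolding perc_space_def
    by (rule measurable_PiM_pmf_local[of "box_edges K n"])
       (simp_all add: finite_box_edges box_edges_subset_strip_edges cross_dist_restrict box_horiz_edges_subset)
  have "(\<integral>\<^sup>+\<omega>. perc_dist K n \<omega> * indicator ?A \<omega> \<partial>?P) \<le> (\<integral>\<^sup>+\<omega>. (?C \<omega> + 3 * of_nat K) * indicator ?A \<omega> \<partial>?P)"
    by (intro nn_integral_mono) (simp add: indicator_def event_A_eq perc_dist_le_cross_dist)
  also have "\<dots> = (\<integral>\<^sup>+\<omega>. ?C \<omega> * indicator ?A \<omega> \<partial>?P) + 3 * of_nat K * emeasure ?P ?A"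
    using C_measurable sets_event_A
    by (simp add: distrib_right nn_integral_add nn_integral_cmult_indicator)
  also have "\<dots> \<le> ((\<integral>\<^sup>+\<omega>. ?C \<omega> \<partial>cross_space K \<epsilon>) + 3 * of_nat K) * emeasure ?P ?A"
    using harris_cross_dist_event_A by (simp add: distrib_right add_right_mono)
  finally show "(\<integral>\<^sup>+\<omega>. perc_dist K n \<omega> * indicator ?A \<omega> \<partial>?P)
      \<le> ((\<integral>\<^sup>+\<omega>. ?C \<omega> \<partial>cross_space K \<epsilon>) + 3 * of_nat K) * emeasure ?P ?A" .
qed

end
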